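(* Let $m\ge2$ be an integer, $U_c=m^{-1/(m-1)}$, $g_c=U_c^m$, and $H_m=\sum_{k=1}^m\frac1k$. For $g>0$ consider the potential $$V(U)=\frac1g\sum_{k=1}^m\frac1k\,U_c^{m-k}\Big[U_c^k-(U_c-U)^k\Big].$$ Then $V(0)=0$, the coefficient of $U$ in $V$ is $1/g$, and $U V'(U)=\frac1g\big[U_c^m-(U_c-U)^m\big]$, so the self-consistency equation $UV'(U)=1$ reads $g=g_c-(U_c-U)^m$. Taking for $0<g<g_c$ the solution $U(g)=U_c-(g_c-g)^{1/m}$ (positive real root), the free energy $f_0(g)=V(U(g))-\ln U(g)$ satisfies, as $g\to g_c^-$, $$f_0(g)=f_0(g_c)+H_m\,\frac{g_c-g}{g_c}-\frac{m}{m+1}\Big(\frac{g_c-g}{g_c}\Big)^{1+\frac1m}+O\big((g_c-g)^{1+\frac2m}\big),$$ where $f_0(g_c)=H_m-\ln U_c$. Hence the entropy exponent (defined by $f_0^{\rm sing}\sim(g_c-g)^{2-\gamma}$) is $\gamma_m=1-\frac1m$.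
   Context: In the tensor model, the leading-order potential is $V(x)=\sum_{n\ge1}t_nx^n$ with $t_n$ the sum of couplings of melonic bubbles with $2n$ vertices, here parametrized as $t_1=1/g$, $t_n=\alpha_n/g$; the leading order two-point function $U$ solves $UV'(U)=1$ and the leading order free energy is $f_0=V(U)-\ln U$. A multicritical point of order $m$ is one where $\partial^j g/\partial U^j=0$ for $1\le j\le m-1$ and $\partial^m g/\partial U^m\neq0$. *)

theory Defs
  imports "HOL-Analysis.Analysis"
begin

definition Uc :: "nat \<Rightarrow> real" where
  "Uc m = real m powr (- 1 / (real m - 1))"

definition gc :: "nat \<Rightarrow> real" where
  "gc m = Uc m ^ m"

definition Hm :: "nat \<Rightarrow> real" where
  "Hm m = (\<Sum>k=1..m. 1 / real k)"

definition Vpot :: "nat \<Rightarrow> real \<Rightarrow> real \<Rightarrow> real" where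
  "Vpot m g U = (1 / g) * (\<Sum>k=1..m. (1 / real k) * Uc m ^ (m - k) * (Uc m ^ k - (Uc m - U) ^ k))"

definition Ug :: "nat \<Rightarrow> real \<Rightarrow> real" where
  "Ug m g = Uc m - (gc m - g) powr (1 / real m)"

definition f0 :: "nat \<Rightarrow> real \<Rightarrow> real" where
  "f0 m g = Vpot m g (Ug m g) - ln (Ug m g)"

end

theory Submission
  imports Defs
begin

(* Write u = U_c and H = H_m.  The potential is a telescoped geometric
   sum: its derivative is (1/g) \<Sum>_k u^(m-k) (u-U)^(k-1), so U V'(U) = (u^m - (u-U)^m)/g,
   which gives the algebraic statements once u^(m-1) = 1/m is known.
   For the free energy we parametrize the approach to criticality by the scaling
   variable t = ((g_c - g)/g_c)^(1/m), so that g = g_c (1 - t^m) and U(g) = u (1 - t).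
   In this variable V(U(g)) = (H - P_m(t))/(1 - t^m), where P_m(t) = \<Sum>_{k\<le>m} t^k/k is the
   truncated logarithm series, and f_0(g) - f_0(g_c) = (H - P_m(t))/(1 - t^m) - H - ln(1-t).
   A monotonicity argument bounds the tail of -ln(1-t) beyond P_N(t) by 2 t^(N+1)
   for 0 \<le> t \<le> 1/2; inserting it for N = m+1 shows that the remainder of the claimed
   expansion is O(t^(m+2)) = O((g_c - g)^(1 + 2/m)). *)

lemma Uc_pos: "0 < m \<Longrightarrow> 0 < Uc m"
  by (simp add: Uc_def)

lemma gc_pos: "0 < m \<Longrightarrow> 0 < gc m"
  by (simp add: gc_def Uc_pos)

lemma Uc_power_pred:
  assumes "m \<ge> 2"
  shows "Uc m ^ (m - 1) = 1 / real m"
proof -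
  have "Uc m ^ (m - 1) = real m powr (- 1 / (real m - 1) * real (m - 1))"
    using assms by (simp add: Uc_def powr_realpow[symmetric] powr_powr)
  also have "- 1 / (real m - 1) * real (m - 1) = -1"
    using assms by (simp add: of_nat_diff)
  finally show ?thesis
    using assms by (simp add: powr_minus_divide)
qed

lemma power_powr_nat:
  fixes x :: real
  assumes "0 < x" "0 < m"
  shows "(x ^ m) powr (real n / real m) = x ^ n"
proof -
  have "(x ^ m) powr (real n / real m) = x powr (real m * (real n / real m))"
    using assms(1) by (simp add: powr_realpow[symmetric] powr_powr)
  also have "\<dots> = x ^ n"
    using assms by (simp add: powr_realpow)
  finally show ?thesis .
qed

lemma powr_root_power:
  fixes x :: real
  assumes "0 < x" "0 < m"
  shows "(x powr (1 / real m)) ^ m = x"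
  using assms by (simp add: powr_power)

section \<open>The potential and the self-consistency equation\<close>

lemma geometric_telescope:
  fixes u U :: "'a :: comm_ring_1"
  shows "U * (\<Sum>k=1..m. u ^ (m - k) * (u - U) ^ (k - 1)) = u ^ m - (u - U) ^ m"
proof -
  have "(\<Sum>k=1..m. u ^ (m - k) * (u - U) ^ (k - 1)) = (\<Sum>i<m. u ^ (m - Suc i) * (u - U) ^ i)"
    by (rule sum.reindex_bij_witness[of _ Suc "\<lambda>k. k - 1"]) auto
  moreover have "(u - U) ^ m - u ^ m = ((u - U) - u) * (\<Sum>i<m. u ^ (m - Suc i) * (u - U) ^ i)"
    by (rule power_diff_sumr2)
  ultimately show ?thesis
    by (simp add: algebra_simps)
qed

lemma Vpot_has_derivative:
  "(Vpot m g has_real_derivative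
     (1 / g) * (\<Sum>k=1..m. Uc m ^ (m - k) * (Uc m - U) ^ (k - 1))) (at U)"
proof -
  have term_deriv: "((\<lambda>U. (1 / real k) * Uc m ^ (m - k) * (Uc m ^ k - (Uc m - U) ^ k))
      has_real_derivative Uc m ^ (m - k) * (Uc m - U) ^ (k - 1)) (at U)"
    if "k \<in> {1..m}" for k
    using that by (auto intro!: derivative_eq_intros)
  show ?thesis
    unfolding Vpot_def[abs_def] by (intro DERIV_cmult DERIV_sum term_deriv)
qed

lemma deriv_Vpot:
  "deriv (Vpot m g) U = (1 / g) * (\<Sum>k=1..m. Uc m ^ (m - k) * (Uc m - U) ^ (k - 1))"
  by (rule DERIV_imp_deriv[OF Vpot_has_derivative])

lemma Vpot_at_zero: "Vpot m g 0 = 0"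
  by (simp add: Vpot_def)

text \<open>The linear coefficient of V is 1/g, by the defining property of U_c.\<close>
lemma deriv_Vpot_at_zero:
  assumes "m \<ge> 2"
  shows "deriv (Vpot m g) 0 = 1 / g"
proof -
  have "(\<Sum>k=1..m. Uc m ^ (m - k) * (Uc m - 0) ^ (k - 1)) = (\<Sum>k=1..m. Uc m ^ (m - 1))"
    by (rule sum.cong) (auto simp: power_add[symmetric])
  also have "\<dots> = real m * Uc m ^ (m - 1)"
    by simp
  also have "\<dots> = 1"
    unfolding Uc_power_pred[OF assms] using assms by simp
  finally show ?thesis
    by (simp add: deriv_Vpot)
qed

lemma U_deriv_Vpot: "U * deriv (Vpot m g) U = (1 / g) * (Uc m ^ m - (Uc m - U) ^ m)"
proof -
  have "U * deriv (Vpot m g) U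
      = (1 / g) * (U * (\<Sum>k=1..m. Uc m ^ (m - k) * (Uc m - U) ^ (k - 1)))"
    by (simp only: deriv_Vpot mult.left_commute)
  also have "\<dots> = (1 / g) * (Uc m ^ m - (Uc m - U) ^ m)"
    by (simp only: geometric_telescope)
  finally show ?thesis .
qed

lemma self_consistency_iff:
  assumes "0 < g"
  shows "U * deriv (Vpot m g) U = 1 \<longleftrightarrow> g = gc m - (Uc m - U) ^ m"
  using assms by (auto simp: U_deriv_Vpot gc_def field_simps)

lemma Ug_solution:
  assumes "0 < m" "0 < g" "g < gc m"
  shows "0 < Ug m g \<and> g = gc m - (Uc m - Ug m g) ^ m"
proof
  have "(gc m - g) powr (1 / real m) < gc m powr (1 / real m)"
    using assms by (intro powr_less_mono2) auto
  also have "gc m powr (1 / real m) = Uc m"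
    using power_powr_nat[of "Uc m" m 1] assms(1) by (simp add: gc_def Uc_pos)
  finally show "0 < Ug m g"
    by (simp add: Ug_def)
  show "g = gc m - (Uc m - Ug m g) ^ m"
    using assms by (simp add: Ug_def powr_root_power)
qed

section \<open>The free energy in the scaling variable\<close>

text \<open>The truncated series of -ln(1 - t).\<close>
definition log_partial :: "nat \<Rightarrow> real \<Rightarrow> real" where
  "log_partial N t = (\<Sum>k=1..N. t ^ k / real k)"

lemma log_partial_zero: "log_partial N 0 = 0"
  by (auto simp: log_partial_def intro: sum.neutral)

lemma Vpot_scaled:
  "Vpot m g (Uc m * (1 - t)) = (1 / g) * (Uc m ^ m * (Hm m - log_partial m t))"
proof -
  have term_eq: "(1 / real k) * u ^ (m - k) * (u ^ k - (u - u * (1 - t)) ^ k)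
      = u ^ m * (1 / real k - t ^ k / real k)" if "k \<in> {1..m}" for k and u :: real
  proof -
    have "u ^ (m - k) * u ^ k = u ^ m"
      using that by (simp add: power_add[symmetric])
    moreover have "u - u * (1 - t) = u * t"
      by (simp add: right_diff_distrib)
    ultimately show ?thesis
      by (simp add: power_mult_distrib right_diff_distrib diff_divide_distrib
          mult.commute mult.left_commute)
  qed
  have "(\<Sum>k=1..m. (1 / real k) * Uc m ^ (m - k) * (Uc m ^ k - (Uc m - Uc m * (1 - t)) ^ k))
      = (\<Sum>k=1..m. Uc m ^ m * (1 / real k - t ^ k / real k))"
    by (rule sum.cong) (simp_all only: term_eq)
  also have "\<dots> = Uc m ^ m * (Hm m - log_partial m t)"
    by (simp add: Hm_def log_partial_def sum_distrib_left[symmetric] sum_subtractf)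
  finally show ?thesis
    by (simp add: Vpot_def)
qed

text \<open>At criticality U(g_c) = U_c and V(U_c) = H_m, so f_0(g_c) = H_m - ln U_c.\<close>
lemma f0_critical:
  assumes "0 < m"
  shows "f0 m (gc m) = Hm m - ln (Uc m)"
proof -
  have "Vpot m (gc m) (Uc m * (1 - 0)) = Hm m"
    using Uc_pos[OF assms] by (simp only: Vpot_scaled) (simp add: gc_def log_partial_zero)
  then show ?thesis
    by (simp add: f0_def Ug_def)
qed

text \<open>At g = g_c (1 - t^m) the solution is U(g) = U_c (1 - t), which gives f_0 in closed form.\<close>
lemma f0_scaled:
  assumes "0 < m" "0 < t" "t < 1"
  shows "f0 m (gc m * (1 - t ^ m)) = (Hm m - log_partial m t) / (1 - t ^ m) - ln (Uc m) - ln (1 - t)"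
proof -
  have u: "0 < Uc m"
    using assms(1) by (rule Uc_pos)
  have "(gc m - gc m * (1 - t ^ m)) powr (1 / real m) = ((Uc m * t) ^ m) powr (real 1 / real m)"
    by (simp add: gc_def power_mult_distrib algebra_simps)
  also have "\<dots> = Uc m * t"
    using u assms by (subst power_powr_nat) auto
  finally have U: "Ug m (gc m * (1 - t ^ m)) = Uc m * (1 - t)"
    by (simp add: Ug_def algebra_simps)
  have "t ^ m < 1"
    using assms by (simp add: power_less_one_iff)
  then have V: "Vpot m (gc m * (1 - t ^ m)) (Uc m * (1 - t)) = (Hm m - log_partial m t) / (1 - t ^ m)"
    using u by (simp add: Vpot_scaled gc_def)
  show ?thesis
    using u assms by (simp add: f0_def U V ln_mult)
qed

section \<open>The logarithm-series estimate\<close>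

lemma log_partial_has_derivative:
  "(log_partial N has_real_derivative (\<Sum>i<N. x ^ i)) (at x)"
proof -
  have "(log_partial N has_real_derivative (\<Sum>k=1..N. x ^ (k - 1))) (at x)"
    unfolding log_partial_def[abs_def]
    by (intro DERIV_sum) (auto intro!: derivative_eq_intros)
  moreover have "(\<Sum>k=1..N. x ^ (k - 1)) = (\<Sum>i<N. x ^ i)"
    by (rule sum.reindex_bij_witness[of _ Suc "\<lambda>k. k - 1"]) auto
  ultimately show ?thesis
    by simp
qed

text \<open>The tail of -ln(1 - t) beyond order N is nonnegative and at most 2 t^(N+1) for t \<le> 1/2;
  both bounds follow from the derivative t^N / (1 - t) of the tail.\<close>
lemma log_tail_bounds:
  fixes t :: real
  assumes "0 \<le> t" "t \<le> 1/2"
  shows "0 \<le> - ln (1 - t) - log_partial N t \<and> - ln (1 - t) - log_partial N t \<le> 2 * t ^ (N + 1)"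
proof
  define tail where "tail x = - ln (1 - x) - log_partial N x" for x :: real
  have tail_deriv: "(tail has_real_derivative x ^ N / (1 - x)) (at x)" if "x < 1" for x :: real
  proof -
    have "((\<lambda>x. - ln (1 - x)) has_real_derivative 1 / (1 - x)) (at x)"
      using that by (auto intro!: derivative_eq_intros)
    then have "(tail has_real_derivative 1 / (1 - x) - (\<Sum>i<N. x ^ i)) (at x)"
      unfolding tail_def[abs_def] by (intro DERIV_diff log_partial_has_derivative)
    moreover have "1 / (1 - x) - (\<Sum>i<N. x ^ i) = x ^ N / (1 - x)"
      using that by (simp add: sum_gp_strict field_simps)
    ultimately show ?thesis
      by simp
  qed
  have "tail 0 \<le> tail t"
  proof (rule DERIV_nonneg_imp_nondecreasing[OF assms(1)])
    fix x assume "0 \<le> x" "x \<le> t"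
    then show "\<exists>y. (tail has_real_derivative y) (at x) \<and> 0 \<le> y"
      using assms tail_deriv[of x] by (intro exI[of _ "x ^ N / (1 - x)"]) auto
  qed
  then show "0 \<le> - ln (1 - t) - log_partial N t"
    by (simp add: tail_def log_partial_zero)
  define gap where "gap x = 2 * x ^ (N + 1) - tail x" for x :: real
  have "gap 0 \<le> gap t"
  proof (rule DERIV_nonneg_imp_nondecreasing[OF assms(1)])
    fix x assume x: "0 \<le> x" "x \<le> t"
    have "((\<lambda>x. 2 * x ^ (N + 1)) has_real_derivative 2 * (real (N + 1) * x ^ N)) (at x)"
      using DERIV_cmult[OF DERIV_pow[of "N + 1" x], of 2] by simp
    then have "(gap has_real_derivative 2 * (real (N + 1) * x ^ N) - x ^ N / (1 - x)) (at x)"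
      unfolding gap_def[abs_def] using x assms by (intro DERIV_diff tail_deriv) auto
    moreover have "x ^ N / (1 - x) \<le> 2 * (real (N + 1) * x ^ N)"
    proof -
      have "x ^ N / (1 - x) \<le> x ^ N / (1 / 2)"
        using x assms by (intro divide_left_mono) auto
      also have "\<dots> \<le> 2 * (real (N + 1) * x ^ N)"
        using x by (simp add: mult_le_cancel_left1 mult_le_cancel_right1)
      finally show ?thesis .
    qed
    ultimately show "\<exists>y. (gap has_real_derivative y) (at x) \<and> 0 \<le> y"
      by (intro exI conjI) auto
  qed
  then show "- ln (1 - t) - log_partial N t \<le> 2 * t ^ (N + 1)"
    by (simp add: gap_def tail_def log_partial_zero)
qed

text \<open>Algebraic form of the remainder, with a = t^m, P the truncated series and Q the
  logarithmic tail: the terms of order t^m and t^(m+1) cancel.\<close>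
lemma remainder_identity:
  fixes H P Q a t M :: real
  assumes a: "a \<noteq> 1" and M: "M + 1 \<noteq> 0"
  shows "(H - P) / (1 - a) + (P + t * a / (M + 1) + Q) - H - H * a + M / (M + 1) * (t * a)
        = a * ((a * (H - t) - (P - t)) / (1 - a)) + Q"
proof -
  have "t * a / (M + 1) + M / (M + 1) * (t * a) = (M + 1) * (t * a) / (M + 1)"
    by (simp add: add_divide_distrib distrib_right)
  also have "\<dots> = t * a"
    using M by simp
  finally have "t * a / (M + 1) + M / (M + 1) * (t * a) = t * a" .
  moreover have "(H - P) / (1 - a) = (H - P) + a * (H - P) / (1 - a)"
    using a by (simp add: field_simps)
  moreover have "a * (H - P) / (1 - a) - H * a + t * a = a * ((a * (H - t) - (P - t)) / (1 - a))"
    using a by (simp add: field_simps)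
  ultimately show ?thesis
    by (simp add: algebra_simps)
qed

lemma remainder_bound:
  fixes t :: real
  assumes m: "m \<ge> 2" and t: "0 < t" "t \<le> 1/2"
  defines "H \<equiv> Hm m" and "P \<equiv> log_partial m t"
  shows "\<bar>(H - P) / (1 - t ^ m) - ln (1 - t) - H - H * t ^ m + real m / (real m + 1) * t ^ (m + 1)\<bar>
         \<le> (4 * H + 2) * t ^ (m + 2)"
proof -
  define Q where "Q = - ln (1 - t) - log_partial (m + 1) t"
  have Q_bounds: "0 \<le> Q" "Q \<le> 2 * t ^ (m + 2)"
    using log_tail_bounds[of t "m + 1"] t by (auto simp: Q_def)
  have ln_eq: "ln (1 - t) = - (P + t * t ^ m / (real m + 1) + Q)"
    by (simp add: Q_def P_def log_partial_def add.commute)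
  have H_ge_1: "1 \<le> H"
    unfolding H_def Hm_def using m
    by (subst sum.atLeast_Suc_atMost) (auto intro: sum_nonneg)
  have P_minus_t: "P - t = (\<Sum>k=2..m. t ^ k / real k)"
    using m by (simp add: P_def log_partial_def sum.atLeast_Suc_atMost numeral_2_eq_2)
  have "P - t \<le> (\<Sum>k=1..m. t ^ 2 / real k)"
    unfolding P_minus_t using t
    by (intro order_trans[OF sum_mono sum_mono2]) (auto intro!: divide_right_mono power_decreasing)
  also have "\<dots> = H * t ^ 2"
    by (simp add: H_def Hm_def sum_distrib_right)
  finally have P_upper: "P - t \<le> H * t ^ 2" .
  have P_lower: "0 \<le> P - t"
    unfolding P_minus_t using t by (intro sum_nonneg) auto
  have tm_small: "t ^ m \<le> t ^ 2"
    using t m by (intro power_decreasing) auto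
  have tm_half: "t ^ m \<le> 1 / 2"
    using t m power_decreasing[of 1 m t] by simp
  define X where "X = t ^ m * (H - t) - (P - t)"
  have "\<bar>X\<bar> \<le> 2 * H * t ^ 2"
  proof -
    have "0 \<le> t ^ m * (H - t)"
      using t H_ge_1 by simp
    moreover have "t ^ m * (H - t) \<le> t ^ 2 * H"
      using t H_ge_1 tm_small by (intro mult_mono) auto
    ultimately show ?thesis
      using P_lower P_upper mult.commute[of "t ^ 2" H] by (simp add: X_def abs_le_iff)
  qed
  then have "\<bar>X / (1 - t ^ m)\<bar> \<le> 2 * H * t ^ 2 / (1 / 2)"
    unfolding abs_divide using tm_half by (intro frac_le) auto
  then have frac_bound: "\<bar>X / (1 - t ^ m)\<bar> \<le> 4 * H * t ^ 2"
    by simp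
  have "\<bar>t ^ m * (X / (1 - t ^ m))\<bar> = t ^ m * \<bar>X / (1 - t ^ m)\<bar>"
    by (simp only: abs_mult power_abs abs_of_pos[OF t(1)])
  also have "\<dots> \<le> t ^ m * (4 * H * t ^ 2)"
    using frac_bound t by (intro mult_left_mono) auto
  also have "\<dots> = 4 * H * t ^ (m + 2)"
    by (simp add: power_add power2_eq_square)
  finally have main: "\<bar>t ^ m * (X / (1 - t ^ m))\<bar> \<le> 4 * H * t ^ (m + 2)" .
  have "(H - P) / (1 - t ^ m) - ln (1 - t) - H - H * t ^ m + real m / (real m + 1) * t ^ (m + 1)
      = (H - P) / (1 - t ^ m) + (P + t * t ^ m / (real m + 1) + Q) - H - H * t ^ m
        + real m / (real m + 1) * (t * t ^ m)"
    by (simp add: ln_eq)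
  also have "\<dots> = t ^ m * (X / (1 - t ^ m)) + Q"
    unfolding X_def using tm_half by (intro remainder_identity) auto
  finally show ?thesis
    using main Q_bounds by (simp only: abs_le_iff distrib_right) linarith
qed

section \<open>The singular expansion of the free energy\<close>

lemma scaling_variable:
  assumes m0: "0 < m" and g: "gc m - gc m / 2 ^ m < g" "g < gc m"
  obtains t where "0 < t" "t \<le> 1 / 2" "g = gc m * (1 - t ^ m)" "(gc m - g) / gc m = t ^ m"
    "((gc m - g) / gc m) powr (1 + 1 / real m) = t ^ (m + 1)"
    "(gc m - g) powr (1 + 2 / real m) = gc m powr (1 + 2 / real m) * t ^ (m + 2)"
proof
  define t where "t = ((gc m - g) / gc m) powr (1 / real m)"
  have gc0: "0 < gc m"
    using m0 by (rule gc_pos)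
  have ratio_pos: "0 < (gc m - g) / gc m"
    using g gc0 by (intro divide_pos_pos) auto
  show ratio: "(gc m - g) / gc m = t ^ m"
    unfolding t_def by (rule powr_root_power[OF ratio_pos m0, symmetric])
  show t0: "0 < t"
    unfolding t_def powr_gt_zero using ratio_pos by linarith
  have "t \<le> ((1 / 2) ^ m) powr (1 / real m)"
    unfolding t_def using g gc0 by (intro powr_mono2) (auto simp: field_simps power_divide)
  also have "\<dots> = 1 / 2"
    using power_powr_nat[of "1 / 2" m 1] m0 by simp
  finally show "t \<le> 1 / 2" .
  show "g = gc m * (1 - t ^ m)"
    using ratio gc0 by (simp add: field_simps)
  show "((gc m - g) / gc m) powr (1 + 1 / real m) = t ^ (m + 1)"
    using power_powr_nat[OF t0 m0, of "m + 1"] m0 by (simp add: ratio add_divide_distrib add.commute)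
  have "gc m - g = gc m * t ^ m"
    using ratio gc0 by (simp add: field_simps)
  moreover have "(t ^ m) powr (1 + 2 / real m) = t ^ (m + 2)"
    using power_powr_nat[OF t0 m0, of "m + 2"] m0 by (simp add: add_divide_distrib add.commute)
  ultimately show "(gc m - g) powr (1 + 2 / real m) = gc m powr (1 + 2 / real m) * t ^ (m + 2)"
    using gc0 t0 by (simp add: powr_mult)
qed

text \<open>The singular expansion of f_0 near g_c: in the scaling variable the error is the
  remainder bounded above, and t^(m+2) is a constant multiple of (g_c - g)^(1 + 2/m).\<close>
lemma f0_expansion:
  assumes m: "m \<ge> 2"
  shows "(\<lambda>g. f0 m g - (f0 m (gc m) + Hm m * ((gc m - g) / gc m)
            - real m / (real m + 1) * ((gc m - g) / gc m) powr (1 + 1 / real m)))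
       \<in> O[at_left (gc m)](\<lambda>g. (gc m - g) powr (1 + 2 / real m))"
    (is "?R \<in> O[_](?E)")
proof (rule bigoI)
  have m0: "0 < m" and gc0: "0 < gc m"
    using m by (auto intro: gc_pos)
  have near: "gc m - gc m / 2 ^ m < gc m"
    using gc0 by simp
  show "\<forall>\<^sub>F g in at_left (gc m). norm (?R g) \<le> (4 * Hm m + 2) / gc m powr (1 + 2 / real m) * norm (?E g)"
    using eventually_at_left_real[OF near]
  proof (rule eventually_mono)
    fix g assume "g \<in> {gc m - gc m / 2 ^ m<..<gc m}"
    then obtain t where t0: "0 < t" and t_half: "t \<le> 1 / 2" and g_eq: "g = gc m * (1 - t ^ m)"
      and ratio: "(gc m - g) / gc m = t ^ m"
      and pow1: "((gc m - g) / gc m) powr (1 + 1 / real m) = t ^ (m + 1)"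
      and pow2: "(gc m - g) powr (1 + 2 / real m) = gc m powr (1 + 2 / real m) * t ^ (m + 2)"
      using scaling_variable[OF m0] by auto
    have "f0 m g = (Hm m - log_partial m t) / (1 - t ^ m) - ln (Uc m) - ln (1 - t)"
      unfolding g_eq using m0 t0 t_half by (intro f0_scaled) auto
    then have "?R g = (Hm m - log_partial m t) / (1 - t ^ m) - ln (1 - t) - Hm m - Hm m * t ^ m
          + real m / (real m + 1) * t ^ (m + 1)"
      unfolding pow1 unfolding ratio f0_critical[OF m0] by linarith
    then have "\<bar>?R g\<bar> \<le> (4 * Hm m + 2) * t ^ (m + 2)"
      using remainder_bound[OF m t0 t_half] by simp
    then show "norm (?R g) \<le> (4 * Hm m + 2) / gc m powr (1 + 2 / real m) * norm (?E g)"
      using gc0 t0 by (simp add: pow2)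
  qed
qed

theorem mainTheorem7:
  fixes m :: nat
  assumes "m \<ge> 2"
  shows
    "(\<forall>g>0. Vpot m g 0 = 0)
     \<and> (\<forall>g>0. deriv (Vpot m g) 0 = 1 / g)
     \<and> (\<forall>g>0. \<forall>U. U * deriv (Vpot m g) U = (1 / g) * (Uc m ^ m - (Uc m - U) ^ m))
     \<and> (\<forall>g>0. \<forall>U. U * deriv (Vpot m g) U = 1 \<longleftrightarrow> g = gc m - (Uc m - U) ^ m)
     \<and> (\<forall>g. 0 < g \<and> g < gc m \<longrightarrow> 0 < Ug m g \<and> g = gc m - (Uc m - Ug m g) ^ m)
     \<and> f0 m (gc m) = Hm m - ln (Uc m)
     \<and> (\<lambda>g. f0 m g - (f0 m (gc m) + Hm m * ((gc m - g) / gc m)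
            - real m / (real m + 1) * ((gc m - g) / gc m) powr (1 + 1 / real m)))
       \<in> O[at_left (gc m)](\<lambda>g. (gc m - g) powr (1 + 2 / real m))"
proof -
  have "0 < m"
    using assms by simp
  then show ?thesis
    using assms Vpot_at_zero deriv_Vpot_at_zero U_deriv_Vpot self_consistency_iff
      Ug_solution f0_critical f0_expansion
    by blast
qed

end
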